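(* Fix $M$, integers $L,l$, and a job set $J$ with $L\ge D(J)$, and let $h$ be a hash function that is $(L,l)$-good for $J$. Then, for any choices of which eligible job to work on and for any greedy-enabled adversary, the algorithm GreedyWeakScheduler run on $J$ with parameters $L,l,h$ completes at least half of the jobs within $2Ll$ time steps.
   Context: Job-shop scheduling with unit jobs: machines $M$; jobs $J$ with sequences $\mathrm{seq}(j)\in M^*$, unique identifiers $\mathrm{ind}(j)\in I=\{1,\dots,|M|^c\}$, positions $\mathrm{pos}(j)_t\in\{0,\dots,\mathrm{len}(\mathrm{seq}(j))\}$ (completed at the last value) and states $\mathrm{state}(j)_t$; $\mathrm{que}(m)_t=\{j:\mathrm{seq}(j)_{\mathrm{pos}(j)_t}=m\}$; each step each machine works on at most one job in its queue, which advances one position. Greedy-enabled: each step, before the algorithm acts, an adversary knowing all positions and states may advance any jobs by arbitrary nonnegative amounts. $D(J)=\max_j\mathrm{len}(\mathrm{seq}(j))$. For $h:M^*\times I\to\{0,\dots,L-1\}$ with $h(j):=h(\mathrm{seq}(j),\mathrm{ind}(j))$: $\mathrm{virt}(j,i)=h(j)+i$ for $i<\mathrm{len}(\mathrm{seq}(j))$ and $\infty$ otherwise; $\mathrm{virt}(j)_t=\mathrm{virt}(j,\mathrm{pos}(j)_t)$. GreedyWeakScheduler$(m,L,l,h,t)$ at time $t$ (counted from the start of the subroutine): if $t=0$ set the states of all jobs in $\mathrm{que}(m)_t$ to $0$; let $T=\lfloor t/l\rfloor$, $Q=\{j\in\mathrm{que}(m)_t:\mathrm{virt}(j)_t=T,\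 \mathrm{state}(j)_t=0\}$; if $t\equiv0\pmod l$ and $|Q|>l$, set the states of all jobs in $Q$ to $1$; if $0<|Q|\le l$ work on an arbitrary $j\in Q$ (this is the choice of eligible job), else do nothing. Bad pattern (for fixed $M,L,l,J$): a collection of sets $B_{T,m}$, for $0\le T<2L$ and $m\in M$, of (job, sequence position) pairs such that $\mathrm{seq}(j)_i=m$ for all $(j,i)\in B_{T,m}$; each $j\in J$ appears at most once in $\bigsqcup B_{T,m}$; each $|B_{T,m}|\in\{0\}\cup(l,|J|]$; and $\sum|B_{T,m}|>|J|/2$. The bad pattern occurs for $h$ if $T=\mathrm{virt}(j,i)$ for all $(T,m)$ and all $(j,i)\in B_{T,m}$. The hash function $h$ is $(L,l)$-good for $J$ if no bad pattern (for $M,L,l,J$) occurs for $h$. *)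

theory Defs
  imports Main "HOL-Library.Extended_Nat"
begin

text \<open>Machines are the elements of a finite type 'm (so M = UNIV, |M| = CARD('m)).
  Jobs are elements of a finite set J of type 'j; seq j is the machine sequence of j,
  ind j its identifier. Positions are natural numbers; position length (seq j) means completed.\<close>

definition que :: "'j set \<Rightarrow> ('j \<Rightarrow> 'm list) \<Rightarrow> ('j \<Rightarrow> nat) \<Rightarrow> 'm \<Rightarrow> 'j set" where
  "que J seq pos m = {j \<in> J. pos j < length (seq j) \<and> seq j ! pos j = m}"

definition virt :: "('m list \<Rightarrow> nat \<Rightarrow> nat) \<Rightarrow> ('j \<Rightarrow> 'm list) \<Rightarrow> ('j \<Rightarrow> nat)
                     \<Rightarrow> 'j \<Rightarrow> nat \<Rightarrow> enat" where
  "virt h seq ind j i = (if i < length (seq j) then enat (h (seq j) (ind j) + i) else \<infinity>)"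

definition bad_pattern :: "nat \<Rightarrow> nat \<Rightarrow> 'j set \<Rightarrow> ('j \<Rightarrow> 'm::finite list)
                            \<Rightarrow> (nat \<Rightarrow> 'm \<Rightarrow> ('j \<times> nat) set) \<Rightarrow> bool" where
  "bad_pattern L l J seq B \<longleftrightarrow>
     (\<forall>T<2*L. \<forall>m. \<forall>(j,i)\<in>B T m. j \<in> J \<and> i < length (seq j) \<and> seq j ! i = m) \<and>
     (\<forall>T<2*L. \<forall>T'<2*L. \<forall>m m' j i i'. (j,i) \<in> B T m \<longrightarrow> (j,i') \<in> B T' m'
          \<longrightarrow> T = T' \<and> m = m' \<and> i = i') \<and>
     (\<forall>T<2*L. \<forall>m. card (B T m) = 0 \<or> (l < card (B T m) \<and> card (B T m) \<le> card J)) \<and>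
     2 * (\<Sum>T<2*L. \<Sum>m\<in>UNIV. card (B T m)) > card J"

definition bad_pattern_occurs :: "nat \<Rightarrow> ('m list \<Rightarrow> nat \<Rightarrow> nat) \<Rightarrow> ('j \<Rightarrow> 'm list)
                            \<Rightarrow> ('j \<Rightarrow> nat) \<Rightarrow> (nat \<Rightarrow> 'm \<Rightarrow> ('j \<times> nat) set) \<Rightarrow> bool" where
  "bad_pattern_occurs L h seq ind B \<longleftrightarrow>
     (\<forall>T<2*L. \<forall>m. \<forall>(j,i)\<in>B T m. virt h seq ind j i = enat T)"

definition good_hash :: "nat \<Rightarrow> nat \<Rightarrow> 'j set \<Rightarrow> ('j \<Rightarrow> 'm::finite list) \<Rightarrow> ('j \<Rightarrow> nat)
                          \<Rightarrow> ('m list \<Rightarrow> nat \<Rightarrow> nat) \<Rightarrow> bool" where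
  "good_hash L l J seq ind h \<longleftrightarrow>
     \<not> (\<exists>B. bad_pattern L l J seq B \<and> bad_pattern_occurs L h seq ind B)"

text \<open>The set Q of GreedyWeakScheduler for machine m at time t, where a t is the
  position assignment after the adversary's move at step t and s t the states
  at step t (before the algorithm's state update of that step).\<close>
definition gw_Q :: "'j set \<Rightarrow> ('j \<Rightarrow> 'm list) \<Rightarrow> ('j \<Rightarrow> nat) \<Rightarrow> ('m list \<Rightarrow> nat \<Rightarrow> nat) \<Rightarrow> nat
                    \<Rightarrow> (nat \<Rightarrow> 'j \<Rightarrow> nat) \<Rightarrow> (nat \<Rightarrow> 'j \<Rightarrow> nat) \<Rightarrow> 'm \<Rightarrow> nat \<Rightarrow> 'j set" where
  "gw_Q J seq ind h l a s m t =
     {j \<in> que J seq (a t) m. virt h seq ind j (a t j) = enat (t div l) \<and> s t j = 0}"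

text \<open>A run of GreedyWeakScheduler (on every machine) in the greedy-enabled model.
  p t : positions at the start of step t; a t : positions after the adversary's advance
  at step t; s t : job states used at step t; w t m : the job machine m works on at step t.
  Quantifying over all such runs covers all adversaries (adaptive ones included) and all
  choices of eligible job.\<close>
definition greedy_weak_run ::
  "'j set \<Rightarrow> ('j \<Rightarrow> 'm list) \<Rightarrow> ('j \<Rightarrow> nat) \<Rightarrow> ('m list \<Rightarrow> nat \<Rightarrow> nat) \<Rightarrow> nat
   \<Rightarrow> (nat \<Rightarrow> 'j \<Rightarrow> nat) \<Rightarrow> (nat \<Rightarrow> 'j \<Rightarrow> nat) \<Rightarrow> (nat \<Rightarrow> 'j \<Rightarrow> nat)
   \<Rightarrow> (nat \<Rightarrow> 'm \<Rightarrow> 'j option) \<Rightarrow> bool" where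
  "greedy_weak_run J seq ind h l p a s w \<longleftrightarrow>
     (\<forall>j\<in>J. p 0 j = 0) \<and>
     (\<forall>t. \<forall>j\<in>J. p t j \<le> a t j \<and> a t j \<le> length (seq j)) \<and>
     (\<forall>m. \<forall>j\<in>que J seq (a 0) m. s 0 j = 0) \<and>
     (\<forall>t m. let Q = gw_Q J seq ind h l a s m t in
        (if 0 < card Q \<and> card Q \<le> l then (\<exists>j\<in>Q. w t m = Some j) else w t m = None)) \<and>
     (\<forall>t. \<forall>j\<in>J. s (Suc t) j =
        (if t mod l = 0 \<and> (\<exists>m. j \<in> gw_Q J seq ind h l a s m t \<and> l < card (gw_Q J seq ind h l a s m t))
         then 1 else s t j)) \<and>
     (\<forall>t. \<forall>j\<in>J. p (Suc t) j = a t j + (if \<exists>m. w t m = Some j then 1 else 0))"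

end

theory Submission
  imports Defs
begin

(* Cut time into blocks of l steps.  Invariant: at the start of block T every unfinished
   job that has not been flagged (state 1) satisfies h(j) + pos(j) >= T.  Indeed, if such a
   job j were still at virtual time T at the end of the block, then its machine m had at
   most l candidates at the start of the block (otherwise j would have been flagged); by the
   invariant no other job can join Q during the block, and the job worked on leaves it, so
   after l - 1 steps j is the only candidate and is worked on.  Since h(j) + pos(j) < 2L for
   unfinished jobs, every job unfinished at time 2Ll was flagged, i.e. belongs to a set Q of
   more than l jobs at some block start T < 2L.  A job is flagged at most once, so these
   sets form a bad pattern unless at most half of the jobs are unfinished. *)

definition pattern :: "nat \<Rightarrow> nat \<Rightarrow> 'j set \<Rightarrow> ('j \<Rightarrow> 'm::finite list)
                        \<Rightarrow> (nat \<Rightarrow> 'm \<Rightarrow> ('j \<times> nat) set) \<Rightarrow> bool" where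
  "pattern L l J seq B \<longleftrightarrow>
     (\<forall>T<2*L. \<forall>m. \<forall>(j,i)\<in>B T m. j \<in> J \<and> i < length (seq j) \<and> seq j ! i = m) \<and>
     (\<forall>T<2*L. \<forall>T'<2*L. \<forall>m m' j i i'. (j,i) \<in> B T m \<longrightarrow> (j,i') \<in> B T' m'
          \<longrightarrow> T = T' \<and> m = m' \<and> i = i') \<and>
     (\<forall>T<2*L. \<forall>m. card (B T m) = 0 \<or> (l < card (B T m) \<and> card (B T m) \<le> card J))"

definition pattern_size :: "nat \<Rightarrow> (nat \<Rightarrow> 'm::finite \<Rightarrow> ('j \<times> nat) set) \<Rightarrow> nat" where
  "pattern_size L B = (\<Sum>T<2*L. \<Sum>m\<in>UNIV. card (B T m))"

definition pattern_jobs :: "nat \<Rightarrow> (nat \<Rightarrow> 'm \<Rightarrow> ('j \<times> nat) set) \<Rightarrow> 'j set" where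
  "pattern_jobs L B = fst ` (\<Union>T<2*L. \<Union>m. B T m)"

lemma bad_pattern_iff:
  "bad_pattern L l J seq B \<longleftrightarrow> pattern L l J seq B \<and> card J < 2 * pattern_size L B"
  unfolding bad_pattern_def pattern_def pattern_size_def by (simp only: conj_assoc)

lemma good_hash_pattern_size_le:
  assumes "good_hash L l J seq ind h" "pattern L l J seq B" "bad_pattern_occurs L h seq ind B"
  shows "2 * pattern_size L B \<le> card J"
  using assms unfolding good_hash_def bad_pattern_iff by (auto simp: not_less)

lemma card_le_pattern_size:
  assumes "finite J" "pattern L l J seq B" "X \<subseteq> pattern_jobs L B"
  shows "card X \<le> pattern_size L B"
proof -
  have "B T m \<subseteq> Sigma J (\<lambda>j. {..<length (seq j)})" if "T < 2*L" for T m
    using assms(2) that unfolding pattern_def by fast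
  then have "finite (\<Union>T<2*L. \<Union>m. B T m)"
    using assms(1) by (meson UN_least finite_SigmaI finite_lessThan finite_subset lessThan_iff)
  then have "card X \<le> card (\<Union>T<2*L. \<Union>m. B T m)"
    using assms(3) unfolding pattern_jobs_def by (meson card_image_le card_mono finite_imageI le_trans)
  also have "\<dots> \<le> (\<Sum>T<2*L. card (\<Union>m. B T m))" by (rule card_UN_le) simp
  also have "\<dots> \<le> pattern_size L B"
    unfolding pattern_size_def by (intro sum_mono card_UN_le) simp
  finally show ?thesis .
qed

lemma good_hash_card_le_twice:
  assumes "finite J" "good_hash L l J seq ind h"
    and "pattern L l J seq B" "bad_pattern_occurs L h seq ind B"
    and "C \<subseteq> J" "J - C \<subseteq> pattern_jobs L B"
  shows "card J \<le> 2 * card C"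
proof -
  have "card J = card C + card (J - C)"
    using assms(1,5) by (metis card_Diff_subset card_mono finite_subset le_add_diff_inverse)
  then show ?thesis
    using card_le_pattern_size[OF assms(1,3,6)] good_hash_pattern_size_le[OF assms(2-4)] by linarith
qed

lemma first_operations_pattern:
  fixes seq :: "'j \<Rightarrow> 'm::finite list"
  assumes "finite J" "\<forall>j\<in>J. h (seq j) (ind j) < L"
  obtains B where "pattern L 0 J seq B" "bad_pattern_occurs L h seq ind B"
    "{j \<in> J. seq j \<noteq> []} \<subseteq> pattern_jobs L B"
proof
  define S where "S T m = {j \<in> J. seq j \<noteq> [] \<and> h (seq j) (ind j) = T \<and> hd (seq j) = m}" for T m
  define B where "B T m = (\<lambda>j. (j, 0::nat)) ` S T m" for T m
  have "card (B T m) \<le> card J" for T m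
  proof -
    have "card (B T m) \<le> card (S T m)"
      unfolding B_def by (rule card_image_le) (use assms(1) in \<open>simp add: S_def\<close>)
    also have "\<dots> \<le> card J"
      unfolding S_def using assms(1) by (intro card_mono) auto
    finally show ?thesis .
  qed
  moreover have "\<forall>T<2*L. \<forall>m. \<forall>(j,i)\<in>B T m. j \<in> J \<and> i < length (seq j) \<and> seq j ! i = m"
    by (auto simp: B_def S_def hd_conv_nth)
  moreover have "\<forall>T<2*L. \<forall>T'<2*L. \<forall>m m' j i i'. (j,i) \<in> B T m \<longrightarrow> (j,i') \<in> B T' m'
                    \<longrightarrow> T = T' \<and> m = m' \<and> i = i'"
    by (auto simp: B_def S_def)
  ultimately show "pattern L 0 J seq B"
    unfolding pattern_def by auto
  show "bad_pattern_occurs L h seq ind B"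
    unfolding bad_pattern_occurs_def B_def S_def virt_def by auto
  show "{j \<in> J. seq j \<noteq> []} \<subseteq> pattern_jobs L B"
  proof
    fix j assume "j \<in> {j \<in> J. seq j \<noteq> []}"
    then have "(j, 0) \<in> B (h (seq j) (ind j)) (hd (seq j))" "h (seq j) (ind j) < 2*L"
      using assms(2) by (auto simp: B_def S_def)
    then show "j \<in> pattern_jobs L B"
      unfolding pattern_jobs_def by force
  qed
qed

locale weak_scheduler_run =
  fixes J :: "'j set" and seq :: "'j \<Rightarrow> 'm::finite list" and ind :: "'j \<Rightarrow> nat"
    and h :: "'m list \<Rightarrow> nat \<Rightarrow> nat" and l :: nat
    and p a s :: "nat \<Rightarrow> 'j \<Rightarrow> nat" and w :: "nat \<Rightarrow> 'm \<Rightarrow> 'j option"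
  assumes run: "greedy_weak_run J seq ind h l p a s w"
    and finite_J: "finite J"
    and l_pos: "0 < l"
begin

abbreviation Q :: "'m \<Rightarrow> nat \<Rightarrow> 'j set" where
  "Q m t \<equiv> gw_Q J seq ind h l a s m t"

abbreviation job_hash :: "'j \<Rightarrow> nat" where
  "job_hash j \<equiv> h (seq j) (ind j)"

lemma p_le_a: "j \<in> J \<Longrightarrow> p t j \<le> a t j"
  and a_le_length: "j \<in> J \<Longrightarrow> a t j \<le> length (seq j)"
  and p_Suc: "j \<in> J \<Longrightarrow> p (Suc t) j = a t j + (if \<exists>m. w t m = Some j then 1 else 0)"
  and s_Suc: "j \<in> J \<Longrightarrow> s (Suc t) j = (if t mod l = 0 \<and> (\<exists>m. j \<in> Q m t \<and> l < card (Q m t))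
                                          then 1 else s t j)"
  and s_0: "j \<in> que J seq (a 0) m \<Longrightarrow> s 0 j = 0"
  using run unfolding greedy_weak_run_def by auto

lemma works_in_Q:
  assumes "0 < card (Q m t)" "card (Q m t) \<le> l"
  obtains j where "j \<in> Q m t" "w t m = Some j"
  using run assms unfolding greedy_weak_run_def Let_def by metis

lemma a_le_p_Suc: "j \<in> J \<Longrightarrow> a t j \<le> p (Suc t) j"
  using p_Suc by simp

lemma p_mono:
  assumes "j \<in> J" "t \<le> t'"
  shows "p t j \<le> p t' j"
proof (rule lift_Suc_mono_le[of "\<lambda>t. p t j", OF _ assms(2)])
  show "p n j \<le> p (Suc n) j" for n
    using p_le_a[OF assms(1), of n] a_le_p_Suc[OF assms(1), of n] by linarith
qed

lemma p_le_a_later: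
  assumes "j \<in> J" "t \<le> t'"
  shows "p t j \<le> a t' j"
  using p_mono[OF assms] p_le_a[OF assms(1), of t'] by linarith

lemma a_le_p_later:
  assumes "j \<in> J" "t < t'"
  shows "a t j \<le> p t' j"
  using a_le_p_Suc[OF assms(1), of t] p_mono[OF assms(1), of "Suc t" t'] assms(2) by linarith

lemma flagged_persists:
  assumes "j \<in> J" "s t j \<noteq> 0" "t \<le> t'"
  shows "s t' j \<noteq> 0"
  using assms(3)
proof (induction t' rule: dec_induct)
  case (step n)
  then show ?case using s_Suc[OF assms(1), of n] by simp
qed (use assms(2) in simp)

lemma mem_Q:
  "j \<in> Q m t \<longleftrightarrow> j \<in> J \<and> a t j < length (seq j) \<and> seq j ! a t j = m
                   \<and> job_hash j + a t j = t div l \<and> s t j = 0"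
  unfolding gw_Q_def que_def virt_def by auto

lemma finite_Q: "finite (Q m t)"
  using finite_J by (rule finite_subset[rotated]) (auto simp: mem_Q)

lemma flagged_at:
  assumes "j \<in> Q m (T*l)" "l < card (Q m (T*l))"
  shows "s (Suc (T*l)) j \<noteq> 0"
  using assms s_Suc[of j "T*l"] by (auto simp: mem_Q)

lemma flagged_not_in_later_Q:
  assumes "j \<in> Q m (T*l)" "l < card (Q m (T*l))" "T < T'"
  shows "j \<notin> Q m' (T'*l)"
proof -
  have "Suc (T*l) \<le> Suc T * l" using l_pos by simp
  also have "\<dots> \<le> T'*l" using assms(3) by (intro mult_le_mono1) simp
  finally have "Suc (T*l) \<le> T'*l" .
  then show ?thesis
    using flagged_persists flagged_at[OF assms(1,2)] assms(1) by (auto simp: mem_Q)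
qed

definition on_schedule :: "nat \<Rightarrow> bool" where
  "on_schedule T \<longleftrightarrow>
     (\<forall>j\<in>J. p (T*l) j < length (seq j) \<longrightarrow> s (T*l) j = 0 \<longrightarrow> T \<le> job_hash j + p (T*l) j)"

lemma block_div: "T*l \<le> t \<Longrightarrow> t < Suc T * l \<Longrightarrow> t div l = T"
  using l_pos by (simp add: div_nat_eqI mult.commute)

lemma Q_Suc_in_block:
  assumes "on_schedule T" "T*l \<le> t" "Suc t < Suc T * l" "k \<in> Q m (Suc t)"
  shows "k \<in> Q m t" "w t m \<noteq> Some k"
proof -
  have blk: "t div l = T" "Suc t div l = T"
    using block_div[of T t] block_div[of T "Suc t"] assms(2,3) by simp_all
  have k: "k \<in> J" "a (Suc t) k < length (seq k)" "seq k ! a (Suc t) k = m"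
    "job_hash k + a (Suc t) k = T" "s (Suc t) k = 0"
    using assms(4) blk by (simp_all add: mem_Q)
  have unflagged: "s (T*l) k = 0" "s t k = 0"
    using flagged_persists[OF k(1), of "T*l" "Suc t"] flagged_persists[OF k(1), of t "Suc t"]
      k(5) assms(2) by fastforce+
  have pos: "p (T*l) k \<le> a t k" "a t k \<le> p (Suc t) k" "p (Suc t) k \<le> a (Suc t) k"
    using p_le_a_later[OF k(1) assms(2)] a_le_p_Suc[OF k(1)] p_le_a[OF k(1)] by simp_all
  have "T \<le> job_hash k + p (T*l) k"
    using assms(1) k(1,2) unflagged(1) pos unfolding on_schedule_def by fastforce
  \<comment> \<open>k is at virtual time T both at the block start and at Suc t, so it did not move\<close>
  then have "a t k = a (Suc t) k" "p (Suc t) k = a t k"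
    using k(4) pos by linarith+
  then show "k \<in> Q m t" "w t m \<noteq> Some k"
    using k unflagged(2) blk p_Suc[OF k(1), of t] by (auto simp: mem_Q split: if_splits)
qed

lemma card_Q_Suc_in_block:
  assumes "on_schedule T" "T*l \<le> t" "Suc t < Suc T * l" "card (Q m t) \<le> l"
  shows "card (Q m (Suc t)) \<le> card (Q m t) - 1"
proof (cases "Q m t = {}")
  case True
  then have "Q m (Suc t) = {}"
    using Q_Suc_in_block(1)[OF assms(1-3)] by blast
  then show ?thesis by simp
next
  case False
  then obtain k where k: "k \<in> Q m t" "w t m = Some k"
    using works_in_Q assms(4) finite_Q by (metis card_gt_0_iff)
  then have "Q m (Suc t) \<subseteq> Q m t - {k}"
    using Q_Suc_in_block[OF assms(1-3)] by blast
  then have "card (Q m (Suc t)) \<le> card (Q m t - {k})"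
    using finite_Q by (intro card_mono) simp_all
  then show ?thesis
    using k(1) finite_Q by simp
qed

lemma card_Q_in_block:
  assumes "on_schedule T" "card (Q m (T*l)) \<le> l" "k < l"
  shows "card (Q m (T*l + k)) \<le> l - k"
  using assms(3)
proof (induction k)
  case (Suc k)
  then have "card (Q m (T*l + k)) \<le> l - k" by simp
  moreover have "card (Q m (Suc (T*l + k))) \<le> card (Q m (T*l + k)) - 1"
    using card_Q_Suc_in_block[OF assms(1), of "T*l + k" m] Suc.prems calculation by simp
  ultimately show ?case by simp
qed (use assms(2) in simp)

lemma worked_at_block_end:
  assumes "on_schedule T" "card (Q m (T*l)) \<le> l" "j \<in> Q m (T*l + (l - 1))"
  shows "w (T*l + (l - 1)) m = Some j"
proof -
  let ?t = "T*l + (l - 1)"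
  have "card (Q m ?t) \<le> 1"
    using card_Q_in_block[OF assms(1,2), of "l - 1"] l_pos by simp
  then have "0 < card (Q m ?t)" "card (Q m ?t) \<le> l"
    using assms(3) finite_Q card_gt_0_iff l_pos by fastforce+
  then obtain k where "k \<in> Q m ?t" "w ?t m = Some k"
    by (rule works_in_Q)
  then show ?thesis
    using assms(3) \<open>card (Q m ?t) \<le> 1\<close> card_le_Suc0_iff_eq[OF finite_Q] by auto
qed

lemma on_schedule_Suc:
  assumes "on_schedule T"
  shows "on_schedule (Suc T)"
  unfolding on_schedule_def
proof (intro ballI impI)
  fix j assume j: "j \<in> J" and unfinished: "p (Suc T * l) j < length (seq j)"
    and unflagged: "s (Suc T * l) j = 0"
  have unflagged_before: "s t j = 0" if "t \<le> Suc T * l" for t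
    using flagged_persists[OF j _ that] unflagged by blast
  have p_block: "p (T*l) j \<le> p (Suc T * l) j"
    using p_mono[OF j] by simp
  then have "T \<le> job_hash j + p (T*l) j"
    using assms j unfinished unflagged_before[of "T*l"] unfolding on_schedule_def by fastforce
  show "Suc T \<le> job_hash j + p (Suc T * l) j"
  proof (rule ccontr)
    assume "\<not> ?thesis"
    then have stuck: "job_hash j + p (T*l) j = T" "p (Suc T * l) j = p (T*l) j"
      using \<open>T \<le> job_hash j + p (T*l) j\<close> p_block by auto
    define m where "m = seq j ! p (T*l) j"
    have a_stuck: "a t j = p (T*l) j" if "T*l \<le> t" "t < Suc T * l" for t
      using p_le_a_later[OF j that(1)] a_le_p_later[OF j that(2)] stuck(2) by simp
    have in_Q: "j \<in> Q m t" if "T*l \<le> t" "t < Suc T * l" for t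
      using a_stuck[OF that] block_div[OF that] unflagged_before[of t] that unfinished stuck j
      by (auto simp: mem_Q m_def)
    have "card (Q m (T*l)) \<le> l"
      using flagged_at[OF in_Q[of "T*l"]] unflagged_before[of "Suc (T*l)"] l_pos
      by (fastforce simp: not_less)
    define t where "t = T*l + (l - 1)"
    have t: "T*l \<le> t" "t < Suc T * l" "Suc t = Suc T * l"
      using l_pos by (auto simp: t_def)
    have "w t m = Some j"
      using worked_at_block_end[OF assms \<open>card (Q m (T*l)) \<le> l\<close>] in_Q[OF t(1,2)]
      by (simp add: t_def)
    then show False
      using p_Suc[OF j, of t] a_stuck[OF t(1,2)] stuck(2) t(3) by (auto split: if_splits)
  qed
qed

lemma on_schedule: "on_schedule T"
proof (induction T)
  case 0
  show ?case by (simp add: on_schedule_def)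
next
  case (Suc T)
  then show ?case by (rule on_schedule_Suc)
qed

lemma unfinished_gets_flagged:
  assumes "j \<in> J" "job_hash j < L" "length (seq j) \<le> L" "p (2*L*l) j < length (seq j)"
  obtains T m where "T < 2*L" "j \<in> Q m (T*l)" "l < card (Q m (T*l))"
proof -
  have "s (2*L*l) j \<noteq> 0"
    using on_schedule[of "2*L"] assms unfolding on_schedule_def by fastforce
  moreover have "s 0 j = 0"
  proof -
    have "0 < 2*L*l" using assms(3,4) l_pos by simp
    then have "a 0 j < length (seq j)"
      using a_le_p_later[OF assms(1)] assms(4) le_less_trans by blast
    then show ?thesis using s_0 assms(1) unfolding que_def by blast
  qed
  ultimately obtain t where t: "t < 2*L*l" "s t j = 0" "s (Suc t) j \<noteq> 0"
    using ex_least_nat_less[of "\<lambda>t. s t j \<noteq> 0"] by auto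
  then obtain m where m: "t mod l = 0" "j \<in> Q m t" "l < card (Q m t)"
    using s_Suc[OF assms(1), of t] by (auto split: if_splits)
  have "t = (t div l) * l"
    using mod_div_mult_eq[of t l] m(1) by simp
  moreover have "t div l < 2*L"
    using t(1) by (simp add: less_mult_imp_div_less)
  ultimately show ?thesis
    using that[of "t div l" m] m(2,3) by simp
qed

definition flagged_pattern :: "nat \<Rightarrow> 'm \<Rightarrow> ('j \<times> nat) set" where
  "flagged_pattern T m =
     (if l < card (Q m (T*l)) then (\<lambda>j. (j, a (T*l) j)) ` Q m (T*l) else {})"

lemma mem_flagged_pattern:
  "(j, i) \<in> flagged_pattern T m \<longleftrightarrow> j \<in> Q m (T*l) \<and> i = a (T*l) j \<and> l < card (Q m (T*l))"
  unfolding flagged_pattern_def by auto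

lemma card_flagged_pattern:
  "card (flagged_pattern T m) = (if l < card (Q m (T*l)) then card (Q m (T*l)) else 0)"
proof -
  have "inj_on (\<lambda>j. (j, a (T*l) j)) (Q m (T*l))"
    by (rule inj_onI) simp
  then show ?thesis
    unfolding flagged_pattern_def by (simp add: card_image)
qed

lemma pattern_flagged_pattern: "pattern L l J seq flagged_pattern"
proof -
  have pos: "j \<in> J \<and> i < length (seq j) \<and> seq j ! i = m"
    if "(j, i) \<in> flagged_pattern T m" for T m j i
    using that by (simp add: mem_flagged_pattern mem_Q)
  have once: "T = T' \<and> m = m' \<and> i = i'"
    if "(j, i) \<in> flagged_pattern T m" "(j, i') \<in> flagged_pattern T' m'" for T T' m m' j i i'
  proof -
    have "T = T'"
      using that flagged_not_in_later_Q[of j m T T' m'] flagged_not_in_later_Q[of j m' T' T m]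
      unfolding mem_flagged_pattern by (meson linorder_neqE_nat)
    then show ?thesis
      using that by (simp add: mem_flagged_pattern mem_Q)
  qed
  have "card (Q m t) \<le> card J" for m t
    using finite_J by (intro card_mono) (auto simp: mem_Q)
  then have size: "card (flagged_pattern T m) = 0 \<or>
      (l < card (flagged_pattern T m) \<and> card (flagged_pattern T m) \<le> card J)" for T m
    by (simp add: card_flagged_pattern)
  show ?thesis
    unfolding pattern_def
  proof (intro conjI allI impI)
    show "\<forall>(j,i)\<in>flagged_pattern T m. j \<in> J \<and> i < length (seq j) \<and> seq j ! i = m" for T m
      using pos by blast
  qed (use once size in blast)+
qed

lemma flagged_pattern_occurs: "bad_pattern_occurs L h seq ind flagged_pattern"
proof -
  have "virt h seq ind j i = enat T" if "(j, i) \<in> flagged_pattern T m" for T m j i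
    using that l_pos by (simp add: mem_flagged_pattern mem_Q virt_def)
  then show ?thesis
    unfolding bad_pattern_occurs_def by blast
qed

lemma unfinished_in_flagged_pattern:
  assumes "\<forall>j\<in>J. job_hash j < L" "\<forall>j\<in>J. length (seq j) \<le> L"
  shows "{j \<in> J. p (2*L*l) j < length (seq j)} \<subseteq> pattern_jobs L flagged_pattern"
proof
  fix j assume "j \<in> {j \<in> J. p (2*L*l) j < length (seq j)}"
  then obtain T m where "T < 2*L" "j \<in> Q m (T*l)" "l < card (Q m (T*l))"
    using unfinished_gets_flagged[of j L] assms by auto
  then have "(j, a (T*l) j) \<in> (\<Union>T<2*L. \<Union>m. flagged_pattern T m)"
    by (auto simp: mem_flagged_pattern)
  then show "j \<in> pattern_jobs L flagged_pattern"
    unfolding pattern_jobs_def by (metis fst_conv image_eqI)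
qed

end

theorem lemma5p12:
  fixes J :: "'j set" and seq :: "'j \<Rightarrow> 'm::finite list" and ind :: "'j \<Rightarrow> nat"
    and h :: "'m list \<Rightarrow> nat \<Rightarrow> nat" and L l c :: nat
    and p a s :: "nat \<Rightarrow> 'j \<Rightarrow> nat" and w :: "nat \<Rightarrow> 'm \<Rightarrow> 'j option"
  assumes "finite J"
    and "inj_on ind J"
    and "\<forall>j\<in>J. ind j \<in> {1..card (UNIV :: 'm set) ^ c}"
    and "\<forall>xs i. i \<in> {1..card (UNIV :: 'm set) ^ c} \<longrightarrow> h xs i < L"
    and "\<forall>j\<in>J. length (seq j) \<le> L"
    and "good_hash L l J seq ind h"
    and "greedy_weak_run J seq ind h l p a s w"
  shows "card J \<le> 2 * card {j \<in> J. p (2 * L * l) j = length (seq j)}"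
proof -
  let ?C = "{j \<in> J. p (2 * L * l) j = length (seq j)}"
  have hash_lt: "\<forall>j\<in>J. h (seq j) (ind j) < L"
    using assms(3,4) by blast
  obtain B where B: "pattern L l J seq B" "bad_pattern_occurs L h seq ind B"
    and unfinished: "J - ?C \<subseteq> pattern_jobs L B"
  proof (cases "l = 0")
    case True
    \<comment> \<open>no step is taken before time 2Ll = 0, and any nonempty set is large enough\<close>
    have "\<forall>j\<in>J. p 0 j = 0"
      using assms(7) unfolding greedy_weak_run_def by blast
    then have "J - ?C \<subseteq> {j \<in> J. seq j \<noteq> []}"
      using True by auto
    moreover obtain B where "pattern L 0 J seq B" "bad_pattern_occurs L h seq ind B"
      "{j \<in> J. seq j \<noteq> []} \<subseteq> pattern_jobs L B"
      using first_operations_pattern[of J h seq ind L] assms(1) hash_lt by blast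
    ultimately show thesis
      using that True by blast
  next
    case False
    then interpret weak_scheduler_run J seq ind h l p a s w
      using assms(1,7) by unfold_locales simp_all
    have "J - ?C \<subseteq> {j \<in> J. p (2*L*l) j < length (seq j)}"
    proof
      fix j assume "j \<in> J - ?C"
      then show "j \<in> {j \<in> J. p (2*L*l) j < length (seq j)}"
        using p_le_a[of j "2*L*l"] a_le_length[of j "2*L*l"] by auto
    qed
    then show thesis
      using that[OF pattern_flagged_pattern flagged_pattern_occurs]
        unfinished_in_flagged_pattern[OF hash_lt assms(5)] by blast
  qed
  moreover have "?C \<subseteq> J" by blast
  ultimately show ?thesis
    using good_hash_card_le_twice[OF assms(1,6)] by blast
qed

end
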